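(* Let $\mathcal{L}$ be a block diagram language with compositional semantics $[\![\cdot]\!] : \mathcal{L} \to \mathcal{S}$ into a traced symmetric monoidal category $(\mathcal{S},\otimes,\mathsf{Tr})$, and let $H : \mathcal{S} \to \mathcal{H}$ be a verification functor (as defined in the context). Then the formal system $\mathcal{H}(\mathcal{L},[\![\cdot]\!],H)$ is sound and complete: for every block diagram $A$ of $\mathcal{L}$ with $[\![A]\!] : X \to Y$ and every $P \in H(X)$, $Q \in H(Y)$, the triple $\{P\}\,A\,\{Q\}$ is derivable in $\mathcal{H}(\mathcal{L},[\![\cdot]\!],H)$ if and only if $(P,Q) \in H([\![A]\!])$.
   Context: Hoare category: a relation $r \subseteq X \times Y$ between pre-ordered sets $(X,\sqsubseteq_X)$, $(Y,\sqsubseteq_Y)$ is monotone if $(P,Q)\in r$, $P' \sqsubseteq_X P$ and $Q \sqsubseteq_Y Q'$ imply $(P',Q')\in r$. $\mathcal{H}$ is the category of pre-ordered sets and monotone relations (composition is relational composition, $(P,R)\in s\circ r$ iff $\exists Q\,((P,Q)\in r \wedge (Q,R)\in s)$); it is a traced symmetric monoidal category with monoidal product the cartesian product of pre-orders (coordinatewise order), product of relations $r\times s = \{((P,R),(Q,S)) : (P,Q)\in r,(R,S)\in s\}$, and trace: for $r \subseteq (X\times Z)\times(Y\times Z)$, $(P,R)\in\mathsf{Tr}(r)$ iff there is $Q\in Z$ with $((P,Q),(R,Q))\in r$. Block diagram language: a set $\mathcal{L}^b$ of basic diagrams, closed under the constructors $\mathsf{Seq}(A,B)$ (sequential composition), $\mathsf{Par}(A,B)$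 (parallel composition) and $\mathsf{Fb}(A)$ (feedback). The semantics is compositional: $[\![\mathsf{Seq}(A,B)]\!] = [\![B]\!]\circ[\![A]\!]$, $[\![\mathsf{Par}(A,B)]\!] = [\![A]\!]\otimes[\![B]\!]$, $[\![\mathsf{Fb}(A)]\!] = \mathsf{Tr}([\![A]\!])$, where $\mathsf{Fb}(A)$ is formed only when $[\![A]\!] : X\otimes Z\to Y\otimes Z$, giving $\mathsf{Tr}([\![A]\!]) : X\to Y$. Verification functor: a mapping $H$ assigning to each object $X$ in the image of $[\![\cdot]\!]$ a pre-ordered set $H(X)$, with $H(X\otimes Y) = H(X)\times H(Y)$, and to each morphism $f:X\to Y$ in that image a monotone relation $H(f)\subseteq H(X)\times H(Y)$, such that for all diagrams $A,B$: $H([\![\mathsf{Seq}(A,B)]\!]) = H([\![B]\!])\circ H([\![A]\!])$, $H([\![\mathsf{Par}(A,B)]\!]) = H([\![A]\!])\times H([\![B]\!])$, and $H([\![\mathsf{Fb}(A)]\!]) = \mathsf{Tr}_{\mathcal{H}}(H([\![A]\!]))$. The system $\mathcal{H}(\mathcal{L},[\![\cdot]\!],H)$ derives triples $\{P\}A\{Q\}$ by the rules: (Ax) $\{P\}A\{Q\}$ with no premises, provided $A\in\mathcal{L}^b$ and $(P,Q)\in H([\![A]\!])$; (Con) from $\{P\}A\{Q\}$ infer $\{P'\}A\{Q'\}$ provided $P'\sqsubseteq P$ and $Q\sqsubseteq Q'$; (Par) from $\{P\}A\{Q\}$ and $\{R\}B\{S\}$ infer $\{(P,R)\}\mathsf{Par}(A,B)\{(Q,S)\}$;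 (Seq) from $\{P\}A\{Q\}$ and $\{Q\}B\{R\}$ infer $\{P\}\mathsf{Seq}(A,B)\{R\}$; (Fb) from $\{(P,Q)\}A\{(R,Q)\}$ infer $\{P\}\mathsf{Fb}(A)\{R\}$. *)

theory Defs
  imports Main
begin

datatype 'b diag = Basic 'b | Seq "'b diag" "'b diag" | Par "'b diag" "'b diag" | Fb "'b diag"

text \<open>Universe of elements of the pre-ordered sets H(X); the cartesian product
  H(X) x H(Y) is represented by the pairs VPair p q.\<close>
datatype 'a val = Atom 'a | VPair "'a val" "'a val"

text \<open>Objects 'o of the semantic category S with tensor ot, morphisms 'm with
  domain sdom and codomain scod; sem is the semantic map [[.]].\<close>
inductive wf_diag :: "('m \<Rightarrow> 'o) \<Rightarrow> ('m \<Rightarrow> 'o) \<Rightarrow> ('o \<Rightarrow> 'o \<Rightarrow> 'o) \<Rightarrow> ('b diag \<Rightarrow> 'm) \<Rightarrow> 'b diag \<Rightarrow> bool"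
  for sdom scod ot sem where
  wf_Basic: "wf_diag sdom scod ot sem (Basic b)"
| wf_Seq: "wf_diag sdom scod ot sem A \<Longrightarrow> wf_diag sdom scod ot sem B \<Longrightarrow>
     scod (sem A) = sdom (sem B) \<Longrightarrow> wf_diag sdom scod ot sem (Seq A B)"
| wf_Par: "wf_diag sdom scod ot sem A \<Longrightarrow> wf_diag sdom scod ot sem B \<Longrightarrow>
     wf_diag sdom scod ot sem (Par A B)"
| wf_Fb: "wf_diag sdom scod ot sem A \<Longrightarrow> sdom (sem A) = ot X Z \<Longrightarrow> scod (sem A) = ot Y Z \<Longrightarrow>
     wf_diag sdom scod ot sem (Fb A)"

definition compositional_sem ::
  "('m \<Rightarrow> 'o) \<Rightarrow> ('m \<Rightarrow> 'o) \<Rightarrow> ('o \<Rightarrow> 'o \<Rightarrow> 'o) \<Rightarrow> ('m \<Rightarrow> 'm \<Rightarrow> 'm) \<Rightarrow> ('m \<Rightarrow> 'm \<Rightarrow> 'm)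
    \<Rightarrow> ('m \<Rightarrow> 'm) \<Rightarrow> ('b diag \<Rightarrow> 'm) \<Rightarrow> bool" where
  "compositional_sem sdom scod ot cmp tns tr sem \<longleftrightarrow>
     (\<forall>A B. wf_diag sdom scod ot sem (Seq A B) \<longrightarrow>
        sem (Seq A B) = cmp (sem B) (sem A) \<and>
        sdom (sem (Seq A B)) = sdom (sem A) \<and> scod (sem (Seq A B)) = scod (sem B)) \<and>
     (\<forall>A B. wf_diag sdom scod ot sem (Par A B) \<longrightarrow>
        sem (Par A B) = tns (sem A) (sem B) \<and>
        sdom (sem (Par A B)) = ot (sdom (sem A)) (sdom (sem B)) \<and>
        scod (sem (Par A B)) = ot (scod (sem A)) (scod (sem B))) \<and>
     (\<forall>A X Y Z. wf_diag sdom scod ot sem A \<and> sdom (sem A) = ot X Z \<and> scod (sem A) = ot Y Z \<longrightarrow>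
        sem (Fb A) = tr (sem A) \<and> sdom (sem (Fb A)) = X \<and> scod (sem (Fb A)) = Y)"

definition rel_prod :: "('a val \<times> 'a val) set \<Rightarrow> ('a val \<times> 'a val) set \<Rightarrow> ('a val \<times> 'a val) set" where
  "rel_prod r s = {(VPair P R, VPair Q S) | P Q R S. (P, Q) \<in> r \<and> (R, S) \<in> s}"

definition rel_trace :: "('a val \<times> 'a val) set \<Rightarrow> ('a val \<times> 'a val) set" where
  "rel_trace r = {(P, R). \<exists>Q. (VPair P Q, VPair R Q) \<in> r}"

text \<open>Verification functor: HC X is the carrier of H(X), HL X its pre-order,
  HR f the monotone relation H(f).  Relational composition H(g) o H(f) is
  written HR f O HR g in Isabelle.\<close>
definition verification_functor ::
  "('m \<Rightarrow> 'o) \<Rightarrow> ('m \<Rightarrow> 'o) \<Rightarrow> ('o \<Rightarrow> 'o \<Rightarrow> 'o) \<Rightarrow> ('b diag \<Rightarrow> 'm)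
    \<Rightarrow> ('o \<Rightarrow> 'a val set) \<Rightarrow> ('o \<Rightarrow> 'a val \<Rightarrow> 'a val \<Rightarrow> bool) \<Rightarrow> ('m \<Rightarrow> ('a val \<times> 'a val) set) \<Rightarrow> bool" where
  "verification_functor sdom scod ot sem HC HL HR \<longleftrightarrow>
     (\<forall>X. (\<forall>p\<in>HC X. HL X p p) \<and>
          (\<forall>p\<in>HC X. \<forall>q\<in>HC X. \<forall>r\<in>HC X. HL X p q \<longrightarrow> HL X q r \<longrightarrow> HL X p r)) \<and>
     (\<forall>X Y. HC (ot X Y) = {VPair p q | p q. p \<in> HC X \<and> q \<in> HC Y} \<and>
            (\<forall>p q p' q'. HL (ot X Y) (VPair p q) (VPair p' q') \<longleftrightarrow> HL X p p' \<and> HL Y q q')) \<and>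
     (\<forall>A. wf_diag sdom scod ot sem A \<longrightarrow>
        HR (sem A) \<subseteq> HC (sdom (sem A)) \<times> HC (scod (sem A)) \<and>
        (\<forall>P Q P' Q'. (P, Q) \<in> HR (sem A) \<longrightarrow> P' \<in> HC (sdom (sem A)) \<longrightarrow> HL (sdom (sem A)) P' P \<longrightarrow>
            Q' \<in> HC (scod (sem A)) \<longrightarrow> HL (scod (sem A)) Q Q' \<longrightarrow> (P', Q') \<in> HR (sem A))) \<and>
     (\<forall>A B. wf_diag sdom scod ot sem (Seq A B) \<longrightarrow> HR (sem (Seq A B)) = HR (sem A) O HR (sem B)) \<and>
     (\<forall>A B. wf_diag sdom scod ot sem (Par A B) \<longrightarrow> HR (sem (Par A B)) = rel_prod (HR (sem A)) (HR (sem B))) \<and>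
     (\<forall>A. wf_diag sdom scod ot sem (Fb A) \<longrightarrow> HR (sem (Fb A)) = rel_trace (HR (sem A)))"

inductive derivable ::
  "('m \<Rightarrow> 'o) \<Rightarrow> ('m \<Rightarrow> 'o) \<Rightarrow> ('o \<Rightarrow> 'o \<Rightarrow> 'o) \<Rightarrow> ('b diag \<Rightarrow> 'm)
    \<Rightarrow> ('o \<Rightarrow> 'a val set) \<Rightarrow> ('o \<Rightarrow> 'a val \<Rightarrow> 'a val \<Rightarrow> bool) \<Rightarrow> ('m \<Rightarrow> ('a val \<times> 'a val) set)
    \<Rightarrow> 'a val \<Rightarrow> 'b diag \<Rightarrow> 'a val \<Rightarrow> bool"
  for sdom scod ot sem HC HL HR where
  Ax: "(P, Q) \<in> HR (sem (Basic b)) \<Longrightarrow> derivable sdom scod ot sem HC HL HR P (Basic b) Q"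
| Con: "derivable sdom scod ot sem HC HL HR P A Q \<Longrightarrow>
     P' \<in> HC (sdom (sem A)) \<Longrightarrow> HL (sdom (sem A)) P' P \<Longrightarrow>
     Q' \<in> HC (scod (sem A)) \<Longrightarrow> HL (scod (sem A)) Q Q' \<Longrightarrow>
     derivable sdom scod ot sem HC HL HR P' A Q'"
| ParR: "derivable sdom scod ot sem HC HL HR P A Q \<Longrightarrow> derivable sdom scod ot sem HC HL HR R B S \<Longrightarrow>
     derivable sdom scod ot sem HC HL HR (VPair P R) (Par A B) (VPair Q S)"
| SeqR: "derivable sdom scod ot sem HC HL HR P A Q \<Longrightarrow> derivable sdom scod ot sem HC HL HR Q B R \<Longrightarrow>
     wf_diag sdom scod ot sem (Seq A B) \<Longrightarrow> derivable sdom scod ot sem HC HL HR P (Seq A B) R"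
| FbR: "derivable sdom scod ot sem HC HL HR (VPair P Q) A (VPair R Q) \<Longrightarrow>
     wf_diag sdom scod ot sem (Fb A) \<Longrightarrow> derivable sdom scod ot sem HC HL HR P (Fb A) R"

end

theory Submission
  imports Defs
begin

text \<open>Soundness is rule induction on derivations: each rule of the calculus mirrors one
  clause of the verification functor (monotonicity for Con, relational composition,
  product and trace for Seq, Par and Fb).  Completeness is structural induction on
  well-formed diagrams: the witness of a composite relation (the intermediate
  assertion, the pair components, the loop invariant) is exactly what the premises of
  the corresponding rule need.\<close>

inductive_cases wf_diag_SeqE: "wf_diag sdom scod ot sem (Seq A B)"
inductive_cases wf_diag_ParE: "wf_diag sdom scod ot sem (Par A B)"
inductive_cases wf_diag_FbE: "wf_diag sdom scod ot sem (Fb A)"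

context
  fixes sdom scod :: "'m \<Rightarrow> 'o" and ot :: "'o \<Rightarrow> 'o \<Rightarrow> 'o" and sem :: "'b diag \<Rightarrow> 'm"
    and HC :: "'o \<Rightarrow> 'a val set" and HL :: "'o \<Rightarrow> 'a val \<Rightarrow> 'a val \<Rightarrow> bool"
    and HR :: "'m \<Rightarrow> ('a val \<times> 'a val) set"
  assumes H: "verification_functor sdom scod ot sem HC HL HR"
begin

lemma verification_functor_monotone:
  assumes "wf_diag sdom scod ot sem A" and "(P, Q) \<in> HR (sem A)"
    and "P' \<in> HC (sdom (sem A))" and "HL (sdom (sem A)) P' P"
    and "Q' \<in> HC (scod (sem A))" and "HL (scod (sem A)) Q Q'"
  shows "(P', Q') \<in> HR (sem A)"
  using H assms unfolding verification_functor_def by blast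

lemma verification_functor_Seq:
  "wf_diag sdom scod ot sem (Seq A B) \<Longrightarrow> HR (sem (Seq A B)) = HR (sem A) O HR (sem B)"
  using H unfolding verification_functor_def by blast

lemma verification_functor_Par:
  "wf_diag sdom scod ot sem (Par A B) \<Longrightarrow> HR (sem (Par A B)) = rel_prod (HR (sem A)) (HR (sem B))"
  using H unfolding verification_functor_def by blast

lemma verification_functor_Fb:
  "wf_diag sdom scod ot sem (Fb A) \<Longrightarrow> HR (sem (Fb A)) = rel_trace (HR (sem A))"
  using H unfolding verification_functor_def by blast

lemma derivable_sound:
  assumes "derivable sdom scod ot sem HC HL HR P A Q" and "wf_diag sdom scod ot sem A"
  shows "(P, Q) \<in> HR (sem A)"
  using assms
proof (induction rule: derivable.induct)
  case (Ax P Q b)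
  then show ?case by simp
next
  case (Con P A Q P' Q')
  then show ?case by (blast intro: verification_functor_monotone)
next
  case (ParR P A Q R B S)
  from \<open>wf_diag sdom scod ot sem (Par A B)\<close> have "wf_diag sdom scod ot sem A" "wf_diag sdom scod ot sem B"
    by (auto elim: wf_diag_ParE)
  with ParR.IH show ?case
    by (auto simp: verification_functor_Par[OF ParR.prems] rel_prod_def)
next
  case (SeqR P A Q B R)
  from \<open>wf_diag sdom scod ot sem (Seq A B)\<close> have "wf_diag sdom scod ot sem A" "wf_diag sdom scod ot sem B"
    by (auto elim: wf_diag_SeqE)
  with SeqR.IH show ?case
    by (auto simp: verification_functor_Seq[OF SeqR.hyps(3)])
next
  case (FbR P Q A R)
  from \<open>wf_diag sdom scod ot sem (Fb A)\<close> have "wf_diag sdom scod ot sem A"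
    by (auto elim: wf_diag_FbE)
  with FbR.IH show ?case
    by (auto simp: verification_functor_Fb[OF FbR.hyps(2)] rel_trace_def)
qed

lemma derivable_complete:
  assumes "wf_diag sdom scod ot sem A" and "(P, Q) \<in> HR (sem A)"
  shows "derivable sdom scod ot sem HC HL HR P A Q"
  using assms
proof (induction A arbitrary: P Q rule: wf_diag.induct)
  case (wf_Basic b)
  then show ?case by (rule Ax)
next
  case (wf_Seq A B)
  then have wf: "wf_diag sdom scod ot sem (Seq A B)" by (simp add: wf_diag.wf_Seq)
  with wf_Seq.prems obtain R where "(P, R) \<in> HR (sem A)" "(R, Q) \<in> HR (sem B)"
    by (auto simp: verification_functor_Seq)
  with wf_Seq.IH wf show ?case by (blast intro: SeqR)
next
  case (wf_Par A B)
  then have "wf_diag sdom scod ot sem (Par A B)" by (simp add: wf_diag.wf_Par)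
  with wf_Par.prems obtain P1 P2 Q1 Q2 where "P = VPair P1 P2" "Q = VPair Q1 Q2"
    "(P1, Q1) \<in> HR (sem A)" "(P2, Q2) \<in> HR (sem B)"
    by (auto simp: verification_functor_Par rel_prod_def)
  with wf_Par.IH show ?case by (simp add: ParR)
next
  case (wf_Fb A X Z Y)
  then have wf: "wf_diag sdom scod ot sem (Fb A)" by (blast intro: wf_diag.wf_Fb)
  with wf_Fb.prems obtain R where "(VPair P R, VPair Q R) \<in> HR (sem A)"
    by (auto simp: verification_functor_Fb rel_trace_def)
  with wf_Fb.IH wf show ?case by (blast intro: FbR)
qed

end

theorem theorem3p4:
  fixes sdom scod :: "'m \<Rightarrow> 'o" and ot :: "'o \<Rightarrow> 'o \<Rightarrow> 'o"
    and cmp tns :: "'m \<Rightarrow> 'm \<Rightarrow> 'm" and tr :: "'m \<Rightarrow> 'm"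
    and sem :: "'b diag \<Rightarrow> 'm"
    and HC :: "'o \<Rightarrow> 'a val set" and HL :: "'o \<Rightarrow> 'a val \<Rightarrow> 'a val \<Rightarrow> bool"
    and HR :: "'m \<Rightarrow> ('a val \<times> 'a val) set"
  assumes "compositional_sem sdom scod ot cmp tns tr sem"
    and "verification_functor sdom scod ot sem HC HL HR"
    and "wf_diag sdom scod ot sem A"
    and "P \<in> HC (sdom (sem A))" and "Q \<in> HC (scod (sem A))"
  shows "derivable sdom scod ot sem HC HL HR P A Q \<longleftrightarrow> (P, Q) \<in> HR (sem A)"
  using derivable_sound[OF assms(2) _ assms(3)] derivable_complete[OF assms(2) assms(3)] by blast

end
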